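(* (a) Let $\mathcal O=\xi.H$ be an orbit such that $H_\xi$ is compact. Then $\mu_{\mathcal O}(B)=|\{h\in H:\xi.h\in B\}|$ (for Borel $B\subset X$, with $|\cdot|$ left Haar measure of $H$) defines a $\sigma$-finite Borel measure on $X$ with $\mu_{\mathcal O}(X\setminus\mathcal O)=0$, and $\mu_{\mathcal O}$ does not depend on the choice of $\xi\in\mathcal O$. (b) Assume all stabilizers $H_\xi$, $\xi\in X$, are compact, and let $\varphi:X\to[0,\infty)$ be Borel with $\varphi\in L^1(X,\lambda)$ and $0<\int_H\varphi(\xi.h)dh\le1$ for $\lambda$-a.e. $\xi$. Then $$\mu(B)=\int_{X/H}\mu_{\mathcal O}(B)\,d\overline{\lambda_\varphi}(\mathcal O)=\int_X\varphi(\xi)\int_H\mathbf 1_B(\xi.h)\,dh\,d\lambda(\xi)$$ is a well-defined Borel measure on $X$ (and the two expressions agree).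
   Context: $X$ is a standard Borel space; $H$ is a second countable locally compact group with left Haar measure $dh$, acting on $X$ from the right, $(\xi,h)\mapsto\xi.h$, jointly measurably. $\lambda$ is a $\sigma$-finite quasi-invariant Borel measure on $X$ (for each $h$, $B\mapsto\lambda(B.h)$ is equivalent to $\lambda$). $H_\xi=\{h:\xi.h=\xi\}$. $X/H$ is the orbit space with quotient map $q$ and quotient Borel structure. For $\varphi$ as in the claim, $\overline{\lambda_\varphi}$ is the finite measure on $X/H$ given by $\overline{\lambda_\varphi}(U)=\int_{q^{-1}(U)}\varphi\,d\lambda$. *)

theory Defs
  imports "HOL-Analysis.Analysis"
begin

text \<open>Left Haar measure on a (second countable, locally compact Hausdorff) topological
group, written additively (group_add is not assumed commutative): a Borel measure that is
invariant under left translations, finite on compact sets and positive on nonempty open sets.\<close>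
definition left_haar_measure :: "'h::topological_group_add measure \<Rightarrow> bool" where
  "left_haar_measure m \<longleftrightarrow>
     sets m = sets borel \<and>
     (\<forall>g A. A \<in> sets borel \<longrightarrow> emeasure m ((\<lambda>y. g + y) ` A) = emeasure m A) \<and>
     (\<forall>K. compact K \<longrightarrow> emeasure m K < \<infinity>) \<and>
     (\<forall>U. open U \<and> U \<noteq> {} \<longrightarrow> emeasure m U > 0)"

text \<open>Right action xi.h written as act xi h.\<close>
definition right_action :: "('x \<Rightarrow> 'h::group_add \<Rightarrow> 'x) \<Rightarrow> bool" where
  "right_action act \<longleftrightarrow> (\<forall>\<xi>. act \<xi> 0 = \<xi>) \<and> (\<forall>\<xi> g h. act (act \<xi> g) h = act \<xi> (g + h))"

definition orbit :: "('x \<Rightarrow> 'h \<Rightarrow> 'x) \<Rightarrow> 'x \<Rightarrow> 'x set" where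
  "orbit act \<xi> = range (act \<xi>)"

definition stabilizer :: "('x \<Rightarrow> 'h \<Rightarrow> 'x) \<Rightarrow> 'x \<Rightarrow> 'h set" where
  "stabilizer act \<xi> = {h. act \<xi> h = \<xi>}"

definition orbit_measure :: "'h measure \<Rightarrow> ('x::topological_space \<Rightarrow> 'h \<Rightarrow> 'x) \<Rightarrow> 'x \<Rightarrow> 'x measure" where
  "orbit_measure haar act \<xi> = measure_of UNIV (sets borel) (\<lambda>B. emeasure haar {h. act \<xi> h \<in> B})"

definition orbit_measure_of :: "'h measure \<Rightarrow> ('x::topological_space \<Rightarrow> 'h \<Rightarrow> 'x) \<Rightarrow> 'x set \<Rightarrow> 'x measure" where
  "orbit_measure_of haar act Orb = orbit_measure haar act (SOME \<xi>. \<xi> \<in> Orb)"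

definition orbit_space :: "('x::topological_space \<Rightarrow> 'h \<Rightarrow> 'x) \<Rightarrow> 'x set measure" where
  "orbit_space act = sigma (range (orbit act))
      {U. U \<subseteq> range (orbit act) \<and> orbit act -` U \<in> sets borel}"

definition quotient_measure :: "('x::topological_space \<Rightarrow> 'h \<Rightarrow> 'x) \<Rightarrow> 'x measure \<Rightarrow> ('x \<Rightarrow> real) \<Rightarrow> 'x set measure" where
  "quotient_measure act lam \<phi> = measure_of (range (orbit act)) (sets (orbit_space act))
      (\<lambda>U. \<integral>\<^sup>+ \<xi>\<in>(orbit act -` U). ennreal (\<phi> \<xi>) \<partial>lam)"

end

theory Submission
  imports Defs
begin

text \<open>
  The orbit measure \<open>\<mu>\<^sub>\<xi>\<close> is the image of Haar measure under the orbit map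
  \<open>h \<mapsto> \<xi>.h\<close>; left invariance makes it depend only on the orbit. The substance is that for a
  compact stabilizer the orbit \<open>\<xi>.H\<close> is a Borel set and \<open>\<mu>\<^sub>\<xi>\<close> is sigma-finite. By Lusin's theorem
  the orbit map is continuous on a compact \<open>C\<close> of positive Haar measure, so \<open>T = \<xi>.C\<close> is a compact
  part of the orbit, visited by the orbit during the times \<open>H\<^sub>\<xi> + C\<close>, a compact set of positive
  measure. For a countable compact cover \<open>S\<close> of \<open>H\<close>, the points whose orbit spends positive time
  in \<open>T\<close> during \<open>K \<in> S\<close> form Borel sets (Tonelli) that exhaust the orbit and have finite orbit
  measure.

  Countable additivity of \<open>B \<mapsto> \<integral> \<phi> |{h. \<xi>.h \<in> B}| d\<lambda>\<close> follows from monotone convergence.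
  The measure \<open>\<lambda>\<^sub>\<phi>\<close>-bar is the image of \<open>\<phi> d\<lambda>\<close> under the quotient map, and the orbit measures
  lift to the orbit times, so the two integrals in the statement coincide.
\<close>

lemma open_countable_Union_compact:
  fixes W :: "'a::{t2_space, second_countable_topology} set"
  assumes lc: "locally_compact_space (euclidean :: 'a topology)" and W: "open W"
  obtains S where "countable S" "\<And>K. K \<in> S \<Longrightarrow> compact K" "\<Union>S = W"
proof -
  obtain B :: "'a set set" where B: "countable B" "topological_basis B"
    using ex_countable_basis by blast
  have "Hausdorff_space (euclidean :: 'a topology)"
    unfolding Hausdorff_space_def disjnt_def using hausdorff by auto
  then have nbhd: "neighbourhood_base_of (\<lambda>C. compactin euclidean C \<and> closedin euclidean C)
                     (euclidean :: 'a topology)"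
    using lc locally_compact_space_neighbourhood_base_closedin by blast
  define S where "S = closure ` {b\<in>B. \<exists>K. compact K \<and> b \<subseteq> K \<and> K \<subseteq> W}"
  have compact: "compact C" if "C \<in> S" for C
  proof -
    obtain b K where "compact K" "b \<subseteq> K" "C = closure b"
      using \<open>C \<in> S\<close> unfolding S_def by auto
    then have "C = K \<inter> closure b"
      by (simp add: closure_minimal compact_imp_closed inf.absorb2)
    then show "compact C" using \<open>compact K\<close> by (simp add: compact_Int_closed)
  qed
  have "\<Union>S \<subseteq> W"
  proof (clarsimp simp: S_def)
    fix x b K assume "x \<in> closure b" "compact K" "b \<subseteq> K" "K \<subseteq> W"
    then show "x \<in> W" using closure_minimal compact_imp_closed by blast
  qed
  moreover have "W \<subseteq> \<Union>S"
  proof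
    fix x assume "x \<in> W"
    then obtain U V where UV: "open U" "compact V" "x \<in> U" "U \<subseteq> V" "V \<subseteq> W"
      using nbhd W unfolding neighbourhood_base_of by (metis compactin_euclidean_iff open_openin)
    then obtain b where "b \<in> B" "x \<in> b" "b \<subseteq> U"
      using B(2) topological_basisE by blast
    then show "x \<in> \<Union>S" unfolding S_def using UV closure_subset by blast
  qed
  ultimately have "\<Union>S = W" by (rule subset_antisym)
  moreover have "countable S" unfolding S_def using B(1) by simp
  ultimately show thesis using that compact by blast
qed

lemma (in finite_measure) measure_UN_approx_finite:
  fixes F :: "nat \<Rightarrow> 'a set"
  assumes F: "\<And>i. F i \<in> sets M" and e: "e > 0"
  obtains N where "measure M (\<Union>i. F i) - measure M (\<Union>i\<le>N. F i) < e"
proof -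
  have "(\<lambda>n. measure M (\<Union>i\<le>n. F i)) \<longlonglongrightarrow> measure M (\<Union>n. \<Union>i\<le>n. F i)"
  proof (rule finite_Lim_measure_incseq)
    show "range (\<lambda>n. \<Union>i\<le>n. F i) \<subseteq> sets M" using F by auto
    show "incseq (\<lambda>n. \<Union>i\<le>n. F i)" by (intro monoI UN_mono) auto
  qed
  moreover have "(\<Union>n. \<Union>i\<le>n. F i) = (\<Union>i. F i)" by auto
  ultimately have "(\<lambda>n. measure M (\<Union>i\<le>n. F i)) \<longlonglongrightarrow> measure M (\<Union>i. F i)" by simp
  then obtain N where "\<forall>n\<ge>N. dist (measure M (\<Union>i\<le>n. F i)) (measure M (\<Union>i. F i)) < e"
    using e by (metis LIMSEQ_def)
  then have "\<bar>measure M (\<Union>i\<le>N. F i) - measure M (\<Union>i. F i)\<bar> < e"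
    by (simp add: dist_real_def)
  then have "measure M (\<Union>i. F i) - measure M (\<Union>i\<le>N. F i) < e" by linarith
  then show thesis by (rule that)
qed

lemma (in finite_measure) measure_UN_le_geometric:
  fixes A :: "nat \<Rightarrow> 'a set"
  assumes A: "\<And>i. A i \<in> sets M" and small: "\<And>i. measure M (A i) < e / 2 ^ Suc i"
  shows "measure M (\<Union>i. A i) \<le> e"
proof -
  have "(\<lambda>i. e * (1/2) ^ Suc i) sums (e * 1)"
    by (rule sums_mult[OF power_half_series])
  moreover have "(\<lambda>i. e * (1/2) ^ Suc i) = (\<lambda>i. e / 2 ^ Suc i)"
    by (simp add: power_divide)
  ultimately have geom: "(\<lambda>i. e / 2 ^ Suc i) sums e" by simp
  have summ: "summable (\<lambda>i. measure M (A i))"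
    by (rule summable_comparison_test[OF _ sums_summable[OF geom]])
      (use small in \<open>auto intro!: exI[of _ 0] less_imp_le\<close>)
  have "measure M (\<Union>i. A i) \<le> (\<Sum>i. measure M (A i))"
    using A summ by (intro finite_measure_subadditive_countably) auto
  also have "\<dots> \<le> (\<Sum>i. e / 2 ^ Suc i)"
    using summ geom small by (intro suminf_le) (auto intro: less_imp_le simp: sums_iff)
  also have "\<dots> = e"
    using geom by (rule sums_unique[symmetric])
  finally show ?thesis .
qed

lemma finite_measure_closed_open_regular:
  fixes M :: "'a::{t2_space, second_countable_topology} measure"
  assumes lc: "locally_compact_space (euclidean :: 'a topology)"
    and fin: "finite_measure M" and sM: "sets M = sets borel" and A: "A \<in> sets borel"
  shows "\<forall>e>0. \<exists>F U. closed F \<and> open U \<and> F \<subseteq> A \<and> A \<subseteq> U \<and> measure M (U - F) < e"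
proof -
  interpret finite_measure M by fact
  have "A \<in> sigma_sets UNIV {S. open S}" using A sets_borel by blast
  then show ?thesis
  proof induct
    case (Basic A)
    then have "open A" by simp
    obtain S where S: "countable S" "\<And>K. K \<in> S \<Longrightarrow> compact K" "\<Union>S = A"
      using open_countable_Union_compact[OF lc \<open>open A\<close>] by blast
    show ?case
    proof (cases "S = {}")
      case True
      then show ?thesis using S by (intro allI impI exI[of _ "{}"]) simp
    next
      case False
      define K where "K i = from_nat_into S i" for i
      have "range K = S" using False S(1) by (simp add: K_def range_from_nat_into)
      then have K: "compact (K i)" "K i \<in> sets M" "K i \<subseteq> A" for i
        using S by (auto simp: sM compact_imp_closed)
      have UA: "(\<Union>i. K i) = A" using \<open>range K = S\<close> S(3) by simp
      show ?thesis
      proof (intro allI impI)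
        fix e :: real assume "e > 0"
        then obtain N where N: "measure M (\<Union>i. K i) - measure M (\<Union>i\<le>N. K i) < e"
          using measure_UN_approx_finite[of K e] K by blast
        have "measure M (A - (\<Union>i\<le>N. K i)) = measure M A - measure M (\<Union>i\<le>N. K i)"
          using K \<open>open A\<close> by (intro finite_measure_Diff) (auto simp: sM)
        then have "measure M (A - (\<Union>i\<le>N. K i)) < e" using N UA by simp
        moreover have "closed (\<Union>i\<le>N. K i)"
          using K by (intro closed_UN) (auto simp: compact_imp_closed)
        moreover have "(\<Union>i\<le>N. K i) \<subseteq> A" using K(3) by blast
        ultimately show "\<exists>F U. closed F \<and> open U \<and> F \<subseteq> A \<and> A \<subseteq> U \<and> measure M (U - F) < e"
          using \<open>open A\<close> by blast
      qed
    qed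
  next
    case Empty
    show ?case by (intro allI impI exI[of _ "{}"]) simp
  next
    case (Compl A)
    show ?case
    proof (intro allI impI)
      fix e :: real assume "e > 0"
      with Compl(2) obtain F U where FU: "closed F" "open U" "F \<subseteq> A" "A \<subseteq> U" "measure M (U - F) < e"
        by meson
      have "(UNIV - F) - (UNIV - U) = U - F" by auto
      then have "measure M ((UNIV - F) - (UNIV - U)) < e" using FU(5) by simp
      moreover have "closed (UNIV - U)" "open (UNIV - F)"
        using FU(1,2) by (auto simp: closed_Diff open_Diff)
      moreover have "UNIV - U \<subseteq> UNIV - A" "UNIV - A \<subseteq> UNIV - F" using FU(3,4) by auto
      ultimately show "\<exists>F U. closed F \<and> open U \<and> F \<subseteq> UNIV - A \<and> UNIV - A \<subseteq> U \<and> measure M (U - F) < e"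
        by blast
    qed
  next
    case (Union A)
    show ?case
    proof (intro allI impI)
      fix e :: real assume e: "e > 0"
      have "\<forall>i. \<exists>F U. closed F \<and> open U \<and> F \<subseteq> A i \<and> A i \<subseteq> U \<and> measure M (U - F) < e / 2 / 2 ^ Suc i"
        using Union(2) e by auto
      then obtain F U where FU: "\<And>i. closed (F i)" "\<And>i. open (U i)" "\<And>i. F i \<subseteq> A i"
        "\<And>i. A i \<subseteq> U i" "\<And>i. measure M (U i - F i) < e / 2 / 2 ^ Suc i"
        by metis
      have Fm: "F i \<in> sets M" and Um: "U i \<in> sets M" for i using FU by (simp_all add: sM)
      obtain N where N: "measure M (\<Union>i. F i) - measure M (\<Union>i\<le>N. F i) < e / 2"
        using measure_UN_approx_finite[of F "e/2"] Fm e by auto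
      let ?F = "\<Union>i\<le>N. F i" and ?U = "\<Union>i. U i"
      have "measure M (\<Union>i. U i - F i) \<le> e / 2"
        using Fm Um FU(5) by (intro measure_UN_le_geometric) auto
      moreover have "measure M ((\<Union>i. F i) - ?F) < e / 2"
        using N Fm by (subst finite_measure_Diff) auto
      moreover have "measure M (?U - ?F) \<le> measure M ((\<Union>i. U i - F i) \<union> ((\<Union>i. F i) - ?F))"
        using Fm Um by (intro finite_measure_mono) auto
      moreover have "\<dots> \<le> measure M (\<Union>i. U i - F i) + measure M ((\<Union>i. F i) - ?F)"
        using Fm Um by (intro measure_Un_le) auto
      ultimately have "measure M (?U - ?F) < e" by simp
      moreover have "closed ?F" "open ?U" using FU by auto
      moreover have "?F \<subseteq> (\<Union>i. A i)" "(\<Union>i. A i) \<subseteq> ?U" using FU(3,4) by blast+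
      ultimately show "\<exists>F U. closed F \<and> open U \<and> F \<subseteq> (\<Union>i. A i) \<and> (\<Union>i. A i) \<subseteq> U \<and> measure M (U - F) < e"
        by blast
    qed
  qed
qed

text \<open>The combinatorial core of Lusin's theorem: if each basic open set \<open>b n\<close> has a preimage
  squeezed between \<open>F n\<close> and an open \<open>U n\<close>, then \<open>f\<close> is continuous on the set of points that never
  fall into a gap \<open>U n - F n\<close>.\<close>
lemma continuous_on_sandwiched_preimages:
  fixes f :: "'a::topological_space \<Rightarrow> 'b::topological_space"
  assumes basis: "topological_basis (range b)"
    and F: "\<And>n. F n \<subseteq> f -` b n" and U: "\<And>n. f -` b n \<subseteq> U n" "\<And>n. open (U n)"
  shows "continuous_on (\<Inter>n. F n \<union> - U n) f"
  unfolding continuous_on_open_invariant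
proof (intro allI impI)
  fix V :: "'b set" assume "open V"
  let ?C = "\<Inter>n. F n \<union> - U n" and ?W = "\<Union>n\<in>{n. b n \<subseteq> V}. U n"
  have "?W \<inter> ?C \<subseteq> f -` V"
  proof
    fix x assume "x \<in> ?W \<inter> ?C"
    then obtain n where "x \<in> U n" "b n \<subseteq> V" "x \<in> F n \<union> - U n" by blast
    then show "x \<in> f -` V" using F by blast
  qed
  moreover have "f -` V \<inter> ?C \<subseteq> ?W"
  proof
    fix x assume x: "x \<in> f -` V \<inter> ?C"
    obtain B' where "B' \<in> range b" "f x \<in> B'" "B' \<subseteq> V"
      using topological_basisE[OF basis \<open>open V\<close>, of "f x"] x by blast
    then obtain n where "f x \<in> b n" "b n \<subseteq> V" by blast
    then show "x \<in> ?W" using U(1) by blast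
  qed
  ultimately have "?W \<inter> ?C = f -` V \<inter> ?C" by auto
  moreover have "open ?W" using U(2) by blast
  ultimately show "\<exists>A. open A \<and> A \<inter> ?C = f -` V \<inter> ?C" by blast
qed

lemma lusin_positive_compact:
  fixes M :: "'a::{t2_space, second_countable_topology} measure"
    and f :: "'a \<Rightarrow> 'b::{t2_space, second_countable_topology}"
  assumes lc: "locally_compact_space (euclidean :: 'a topology)"
    and fin: "finite_measure M" and sM: "sets M = sets borel"
    and f: "f \<in> borel_measurable borel"
    and K0: "compact K0" and pos: "measure M K0 > 0"
  obtains C where "compact C" "C \<subseteq> K0" "measure M C > 0" "continuous_on C f"
proof -
  interpret finite_measure M by fact
  obtain B :: "'b set set" where B: "countable B" "topological_basis B"
    using ex_countable_basis by blast
  have "B \<noteq> {}"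
  proof
    assume "B = {}"
    then have "(UNIV :: 'b set) = {}"
      using B(2) unfolding topological_basis_def by (metis Sup_empty open_UNIV subset_empty)
    then show False by simp
  qed
  define b where "b n = from_nat_into B n" for n
  have basis: "topological_basis (range b)"
    using \<open>B \<noteq> {}\<close> B by (simp add: b_def range_from_nat_into)
  have "f -` b n \<in> sets borel" for n
    using basis f by (simp add: topological_basis_open measurable_sets_borel)
  define e where "e = measure M K0 / 2"
  have e: "e > 0" using pos by (simp add: e_def)
  have "\<forall>n. \<exists>F U. closed F \<and> open U \<and> F \<subseteq> f -` b n \<and> f -` b n \<subseteq> U \<and> measure M (U - F) < e / 2 ^ Suc n"
    using finite_measure_closed_open_regular[OF lc fin sM \<open>f -` _ \<in> sets borel\<close>] e by simp
  then obtain F U where FU: "\<And>n. closed (F n)" "\<And>n. open (U n)" "\<And>n. F n \<subseteq> f -` b n"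
      "\<And>n. f -` b n \<subseteq> U n" "\<And>n. measure M (U n - F n) < e / 2 ^ Suc n"
    by metis
  define C where "C = K0 \<inter> (\<Inter>n. F n \<union> - U n)"
  have "closed (\<Inter>n. F n \<union> - U n)"
    using FU(1,2) by (intro closed_INT closed_Un) (auto intro: closed_Compl)
  then have cC: "compact C" unfolding C_def by (simp add: compact_Int_closed K0)
  have Fm: "F n \<in> sets M" and Um: "U n \<in> sets M" for n using FU by (simp_all add: sM)
  have K0m: "K0 \<in> sets M" and Cm: "C \<in> sets M"
    using K0 cC by (simp_all add: sM compact_imp_closed)
  have gaps: "measure M (\<Union>n. U n - F n) \<le> e"
    using Fm Um FU(5) by (intro measure_UN_le_geometric) auto
  have "K0 - C \<subseteq> (\<Union>n. U n - F n)" unfolding C_def by blast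
  then have "measure M (K0 - C) \<le> measure M (\<Union>n. U n - F n)"
    using Fm Um by (intro finite_measure_mono) auto
  then have "measure M (K0 - C) \<le> e" using gaps by simp
  moreover have "measure M (K0 - C) = measure M K0 - measure M C"
    using K0m Cm by (intro finite_measure_Diff) (auto simp: C_def)
  ultimately have "measure M C > 0" using e by (simp add: e_def)
  moreover have "continuous_on C f"
    using continuous_on_sandwiched_preimages[OF basis FU(3,4,2)]
    by (rule continuous_on_subset) (auto simp: C_def)
  ultimately show thesis using that cC by (auto simp: C_def)
qed

lemma left_haar_measureD:
  assumes "left_haar_measure haar"
  shows left_haar_sets: "sets haar = sets borel"
    and left_haar_space: "space haar = UNIV"
    and left_haar_translate: "A \<in> sets borel \<Longrightarrow> emeasure haar ((\<lambda>y. g + y) ` A) = emeasure haar A"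
    and left_haar_compact_finite: "compact K \<Longrightarrow> emeasure haar K < \<infinity>"
    and left_haar_open_positive: "open U \<Longrightarrow> U \<noteq> {} \<Longrightarrow> emeasure haar U > 0"
  using assms unfolding left_haar_measure_def by (auto dest: sets_eq_imp_space_eq)

lemma left_haar_sigma_finite:
  fixes haar :: "'h::{topological_group_add, t2_space, second_countable_topology} measure"
  assumes lc: "locally_compact_space (euclidean :: 'h topology)" and haar: "left_haar_measure haar"
  shows "sigma_finite_measure haar"
proof
  obtain S where S: "countable S" "\<And>K. K \<in> S \<Longrightarrow> compact K" "\<Union>S = (UNIV :: 'h set)"
    using open_countable_Union_compact[OF lc open_UNIV] by blast
  moreover have "emeasure haar K \<noteq> \<infinity>" if "K \<in> S" for K
    using left_haar_compact_finite[OF haar S(2)[OF that]] by simp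
  ultimately show "\<exists>A. countable A \<and> A \<subseteq> sets haar \<and> \<Union>A = space haar \<and> (\<forall>a\<in>A. emeasure haar a \<noteq> \<infinity>)"
    using left_haar_sets[OF haar] left_haar_space[OF haar]
    by (intro exI[of _ S]) (auto simp: compact_imp_closed)
qed

text \<open>Haar measure charges some compact set; this is where a measurable map on the group can be
  made continuous (Lusin).\<close>
lemma left_haar_compact_positive:
  fixes haar :: "'h::{topological_group_add, t2_space, second_countable_topology} measure"
  assumes lc: "locally_compact_space (euclidean :: 'h topology)" and haar: "left_haar_measure haar"
  obtains K where "compact K" "emeasure haar K > 0"
proof -
  obtain S where S: "countable S" "\<And>K. K \<in> S \<Longrightarrow> compact K" "\<Union>S = (UNIV :: 'h set)"
    using open_countable_Union_compact[OF lc open_UNIV] by blast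
  have "\<exists>K\<in>S. emeasure haar K \<noteq> 0"
  proof (rule ccontr)
    assume "\<not> ?thesis"
    then have "(\<Union>K\<in>S. K) \<in> null_sets haar"
      using S left_haar_sets[OF haar] by (intro null_sets_UN') (auto simp: compact_imp_closed)
    then show False
      using S(3) left_haar_open_positive[OF haar, of UNIV] by (simp add: null_sets_def)
  qed
  then show thesis using that S(2) by (auto simp: zero_less_iff_neq_zero)
qed

lemma right_actionD:
  assumes "right_action act"
  shows right_action_zero: "act \<xi> 0 = \<xi>"
    and right_action_add: "act (act \<xi> g) h = act \<xi> (g + h)"
  using assms unfolding right_action_def by auto

lemma orbit_self: "right_action act \<Longrightarrow> \<xi> \<in> orbit act \<xi>"
  unfolding orbit_def by (metis rangeI right_action_zero)

lemma act_visits_translate: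
  fixes act :: "'x \<Rightarrow> 'h::group_add \<Rightarrow> 'x"
  assumes act: "right_action act"
  shows "{h. act (act \<xi> g) h \<in> B} = (\<lambda>y. - g + y) ` {h. act \<xi> h \<in> B}"
proof
  show "{h. act (act \<xi> g) h \<in> B} \<subseteq> (\<lambda>y. - g + y) ` {h. act \<xi> h \<in> B}"
  proof
    fix h assume "h \<in> {h. act (act \<xi> g) h \<in> B}"
    then have "act \<xi> (g + h) \<in> B" by (simp add: right_action_add[OF act])
    moreover have "h = - g + (g + h)" by (simp add: add.assoc[symmetric])
    ultimately show "h \<in> (\<lambda>y. - g + y) ` {h. act \<xi> h \<in> B}" by blast
  qed
  show "(\<lambda>y. - g + y) ` {h. act \<xi> h \<in> B} \<subseteq> {h. act (act \<xi> g) h \<in> B}"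
    by (auto simp: right_action_add[OF act] add.assoc[symmetric])
qed

lemma act_orbit_map_measurable:
  assumes "(\<lambda>p. act (fst p) (snd p)) \<in> borel_measurable (borel \<Otimes>\<^sub>M borel)"
  shows "act \<xi> \<in> borel_measurable borel"
  using measurable_Pair2[OF assms, of \<xi>] by simp

lemma act_visits_borel:
  assumes "(\<lambda>p. act (fst p) (snd p)) \<in> borel_measurable (borel \<Otimes>\<^sub>M borel)" and "B \<in> sets borel"
  shows "{h. act \<xi> h \<in> B} \<in> sets borel"
  using measurable_sets[OF act_orbit_map_measurable[OF assms(1)] assms(2)] by (simp add: vimage_def)

lemma orbit_measure_eq_distr:
  assumes haar: "left_haar_measure haar"
  shows "orbit_measure haar act \<xi> = distr haar borel (act \<xi>)"
  unfolding orbit_measure_def distr_def space_borel left_haar_space[OF haar]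
  by (simp add: vimage_def)

lemma emeasure_orbit_measure:
  fixes act :: "'x::topological_space \<Rightarrow> 'h::topological_group_add \<Rightarrow> 'x"
  assumes haar: "left_haar_measure haar"
    and act_meas: "(\<lambda>p. act (fst p) (snd p)) \<in> borel_measurable (borel \<Otimes>\<^sub>M borel)"
    and B: "B \<in> sets borel"
  shows "emeasure (orbit_measure haar act \<xi>) B = emeasure haar {h. act \<xi> h \<in> B}"
proof -
  have "act \<xi> \<in> measurable haar borel"
    using act_orbit_map_measurable[OF act_meas, of \<xi>]
      measurable_cong_sets[OF left_haar_sets[OF haar] refl, of "borel :: 'x measure"] by simp
  from emeasure_distr[OF this B] show ?thesis
    unfolding orbit_measure_eq_distr[OF haar] by (simp add: left_haar_space[OF haar] vimage_def)
qed

text \<open>Left invariance of Haar measure makes the orbit measure independent of the base point.\<close>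
lemma orbit_measure_act:
  assumes haar: "left_haar_measure haar" and act: "right_action act"
    and act_meas: "(\<lambda>p. act (fst p) (snd p)) \<in> borel_measurable (borel \<Otimes>\<^sub>M borel)"
  shows "orbit_measure haar act (act \<xi> g) = orbit_measure haar act \<xi>"
proof (rule measure_eqI)
  show "sets (orbit_measure haar act (act \<xi> g)) = sets (orbit_measure haar act \<xi>)"
    by (simp add: orbit_measure_eq_distr[OF haar])
  fix B assume "B \<in> sets (orbit_measure haar act (act \<xi> g))"
  then have B: "B \<in> sets borel" by (simp add: orbit_measure_eq_distr[OF haar])
  show "emeasure (orbit_measure haar act (act \<xi> g)) B = emeasure (orbit_measure haar act \<xi>) B"
    using act_visits_borel[OF act_meas B]
    by (simp add: emeasure_orbit_measure[OF haar act_meas B] act_visits_translate[OF act]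
        left_haar_translate[OF haar])
qed

lemma orbit_measure_of_orbit:
  assumes haar: "left_haar_measure haar" and act: "right_action act"
    and act_meas: "(\<lambda>p. act (fst p) (snd p)) \<in> borel_measurable (borel \<Otimes>\<^sub>M borel)"
  shows "orbit_measure_of haar act (orbit act \<xi>) = orbit_measure haar act \<xi>"
proof -
  have "(SOME \<zeta>. \<zeta> \<in> orbit act \<xi>) \<in> orbit act \<xi>"
    using orbit_self[OF act] by (rule someI)
  then obtain g where "(SOME \<zeta>. \<zeta> \<in> orbit act \<xi>) = act \<xi> g" unfolding orbit_def by auto
  then show ?thesis
    unfolding orbit_measure_of_def using orbit_measure_act[OF haar act act_meas] by simp
qed

text \<open>The times at which the orbit of \<open>\<xi>\<close> visits \<open>\<xi>.C\<close> lie in \<open>H\<^sub>\<xi> + C\<close>, a compact set when the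
  stabilizer and \<open>C\<close> are compact.\<close>
lemma act_visits_image_subset:
  fixes act :: "'x \<Rightarrow> 'h::group_add \<Rightarrow> 'x"
  assumes act: "right_action act"
  shows "{h. act \<xi> h \<in> act \<xi> ` C} \<subseteq> (\<lambda>p. fst p + snd p) ` (stabilizer act \<xi> \<times> C)"
proof
  fix h assume "h \<in> {h. act \<xi> h \<in> act \<xi> ` C}"
  then obtain c where c: "c \<in> C" "act \<xi> h = act \<xi> c" by auto
  have "act \<xi> (h + - c) = act (act \<xi> h) (- c)" by (simp add: right_action_add[OF act])
  also have "\<dots> = act (act \<xi> c) (- c)" using c(2) by simp
  also have "\<dots> = \<xi>" by (simp add: right_action_add[OF act] right_action_zero[OF act])
  finally have "h + - c \<in> stabilizer act \<xi>" unfolding stabilizer_def by simp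
  moreover have "h = (h + - c) + c" by (simp add: add.assoc)
  ultimately show "h \<in> (\<lambda>p. fst p + snd p) ` (stabilizer act \<xi> \<times> C)"
    using c(1) by (auto intro!: image_eqI[of _ _ "(h + - c, c)"])
qed

lemma orbit_compact_target:
  fixes act :: "'x::{t2_space, second_countable_topology} \<Rightarrow>
                'h::{topological_group_add, t2_space, second_countable_topology} \<Rightarrow> 'x"
  assumes lc: "locally_compact_space (euclidean :: 'h topology)"
    and haar: "left_haar_measure haar" and act: "right_action act"
    and act_meas: "(\<lambda>p. act (fst p) (snd p)) \<in> borel_measurable (borel \<Otimes>\<^sub>M borel)"
    and stab: "compact (stabilizer act \<xi>)"
  obtains T D where "compact T" "T \<subseteq> orbit act \<xi>" "compact D" "{h. act \<xi> h \<in> T} \<subseteq> D"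
    "emeasure haar {h. act \<xi> h \<in> T} > 0"
proof -
  have haar_sets: "K \<in> sets haar" if "compact K" for K
    using that by (simp add: left_haar_sets[OF haar] compact_imp_closed)
  obtain K0 where K0: "compact K0" "emeasure haar K0 > 0"
    using left_haar_compact_positive[OF lc haar] by blast
  \<comment> \<open>Restricting Haar measure to \<open>K0\<close> gives a finite measure to which Lusin applies.\<close>
  define M0 where "M0 = density haar (indicator K0)"
  have M0: "emeasure M0 X = emeasure haar (K0 \<inter> X)" if "X \<in> sets borel" for X
    unfolding M0_def using that haar_sets[OF K0(1)] left_haar_sets[OF haar]
    by (intro emeasure_restricted) auto
  have sets_M0: "sets M0 = sets borel" and space_M0: "space M0 = UNIV"
    unfolding M0_def by (simp_all add: left_haar_sets[OF haar] left_haar_space[OF haar])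
  have "finite_measure M0"
    using M0[of UNIV] left_haar_compact_finite[OF haar K0(1)] space_M0
    by (intro finite_measureI) simp
  then interpret M0: finite_measure M0 .
  have "ennreal (measure M0 K0) = emeasure haar K0"
    using M0[of K0] K0(1) M0.emeasure_eq_measure by (simp add: compact_imp_closed)
  then have "measure M0 K0 > 0" using K0(2) by (metis ennreal_less_zero_iff)
  then obtain C where C: "compact C" "C \<subseteq> K0" "measure M0 C > 0" "continuous_on C (act \<xi>)"
    using lusin_positive_compact[OF lc \<open>finite_measure M0\<close> sets_M0
        act_orbit_map_measurable[OF act_meas] K0(1)] by blast
  define T where "T = act \<xi> ` C"
  have "compact T" unfolding T_def using C by (intro compact_continuous_image)
  have "T \<subseteq> orbit act \<xi>" unfolding T_def orbit_def by auto
  have "emeasure haar C = ennreal (measure M0 C)"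
    using M0[of C] C(1,2) M0.emeasure_eq_measure by (simp add: compact_imp_closed Int_absorb1)
  then have "emeasure haar C > 0" using C(3) by simp
  moreover have "emeasure haar C \<le> emeasure haar {h. act \<xi> h \<in> T}"
    using act_visits_borel[OF act_meas] \<open>compact T\<close> left_haar_sets[OF haar]
    by (intro emeasure_mono) (auto simp: T_def compact_imp_closed)
  ultimately have "emeasure haar {h. act \<xi> h \<in> T} > 0" by simp
  moreover have "compact ((\<lambda>p. fst p + snd p) ` (stabilizer act \<xi> \<times> C))"
    by (intro compact_continuous_image compact_Times stab C(1) continuous_intros)
  ultimately show thesis
    using that \<open>compact T\<close> \<open>T \<subseteq> orbit act \<xi>\<close> act_visits_image_subset[OF act, of \<xi> C]
    unfolding T_def by blast
qed

text \<open>Countably many of these sets (one for each \<open>K\<close> of a compact cover of the group)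
  cover the orbit of any point visiting \<open>T\<close> substantially, and each is Borel.\<close>
definition visiting_set :: "'h measure \<Rightarrow> ('x \<Rightarrow> 'h \<Rightarrow> 'x) \<Rightarrow> 'x set \<Rightarrow> 'h set \<Rightarrow> 'x set" where
  "visiting_set haar act T K = {x. emeasure haar {h \<in> K. act x h \<in> T} > 0}"

lemma visiting_set_visits:
  assumes "x \<in> visiting_set haar act T K"
  shows "\<exists>h\<in>K. act x h \<in> T"
proof (rule ccontr)
  assume "\<not> ?thesis"
  then have "{h \<in> K. act x h \<in> T} = {}" by auto
  with assms show False unfolding visiting_set_def by simp
qed

text \<open>Measurability of visiting sets is Tonelli for the indicator of \<open>{(x, h). h \<in> K, x.h \<in> T}\<close>.\<close>
lemma visiting_set_borel:
  fixes act :: "'x::topological_space \<Rightarrow> 'h::topological_space \<Rightarrow> 'x"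
  assumes sf: "sigma_finite_measure haar" and haar_sets: "sets haar = sets borel"
    and act_meas: "(\<lambda>p. act (fst p) (snd p)) \<in> borel_measurable (borel \<Otimes>\<^sub>M borel)"
    and T: "T \<in> sets borel" and K: "K \<in> sets borel"
  shows "visiting_set haar act T K \<in> sets borel"
proof -
  interpret sigma_finite_measure haar by fact
  define Q where "Q = {p :: 'x \<times> 'h. snd p \<in> K \<and> act (fst p) (snd p) \<in> T}"
  have "Q = (UNIV \<times> K) \<inter> ((\<lambda>p. act (fst p) (snd p)) -` T \<inter> space (borel \<Otimes>\<^sub>M borel))"
    unfolding Q_def by (auto simp: space_pair_measure)
  also have "\<dots> \<in> sets (borel \<Otimes>\<^sub>M borel)"
  proof (rule sets.Int)
    show "UNIV \<times> K \<in> sets (borel \<Otimes>\<^sub>M borel)" using K by (intro pair_measureI) auto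
  qed (rule measurable_sets[OF act_meas T])
  finally have "Q \<in> sets (borel \<Otimes>\<^sub>M haar)"
    using sets_pair_measure_cong[OF refl haar_sets, of "borel :: 'x measure"] by simp
  then have "(\<lambda>x. emeasure haar (Pair x -` Q)) \<in> borel_measurable borel"
    by (rule measurable_emeasure_Pair)
  from measurable_sets[OF this, of "{0<..}"] show ?thesis
    unfolding visiting_set_def Q_def by (simp add: vimage_def)
qed

text \<open>If the orbit of \<open>\<xi>\<close> spends positive time in \<open>T \<subseteq> \<xi>.H\<close>, so does the orbit of every point of
  \<open>\<xi>.H\<close> (left invariance), hence the orbit is the union of the visiting sets over any countable
  cover of the group.\<close>
lemma orbit_eq_UN_visiting_sets:
  fixes act :: "'x::topological_space \<Rightarrow> 'h::topological_group_add \<Rightarrow> 'x"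
  assumes haar: "left_haar_measure haar" and act: "right_action act"
    and act_meas: "(\<lambda>p. act (fst p) (snd p)) \<in> borel_measurable (borel \<Otimes>\<^sub>M borel)"
    and S: "countable S" "\<Union>S = UNIV" "\<And>K. K \<in> S \<Longrightarrow> K \<in> sets borel"
    and T: "T \<in> sets borel" "T \<subseteq> orbit act \<xi>" and pos: "emeasure haar {h. act \<xi> h \<in> T} > 0"
  shows "orbit act \<xi> = (\<Union>K\<in>S. visiting_set haar act T K)"
proof
  show "(\<Union>K\<in>S. visiting_set haar act T K) \<subseteq> orbit act \<xi>"
  proof
    fix x assume "x \<in> (\<Union>K\<in>S. visiting_set haar act T K)"
    then obtain K where "x \<in> visiting_set haar act T K" by (rule UN_E)
    then obtain h where "act x h \<in> T" by (metis visiting_set_visits)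
    then obtain c where c: "act x h = act \<xi> c" using T(2) unfolding orbit_def by auto
    have "x = act (act x h) (- h)"
      by (simp add: right_action_add[OF act] right_action_zero[OF act])
    also have "\<dots> = act \<xi> (c + - h)" by (simp add: c right_action_add[OF act])
    finally show "x \<in> orbit act \<xi>" unfolding orbit_def by auto
  qed
  show "orbit act \<xi> \<subseteq> (\<Union>K\<in>S. visiting_set haar act T K)"
  proof
    fix x assume "x \<in> orbit act \<xi>"
    then obtain g where g: "x = act \<xi> g" unfolding orbit_def by auto
    let ?E = "{h. act x h \<in> T}"
    have E_borel: "?E \<in> sets borel" using act_visits_borel[OF act_meas T(1)] .
    have "emeasure haar ?E > 0"
      using pos act_visits_borel[OF act_meas T(1)]
      by (simp add: g act_visits_translate[OF act] left_haar_translate[OF haar])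
    then have E_not_null: "?E \<notin> null_sets haar" by (auto simp: null_sets_def)
    have piece_sets: "{h \<in> K. act x h \<in> T} \<in> sets haar" if "K \<in> S" for K
    proof -
      have "{h \<in> K. act x h \<in> T} = K \<inter> ?E" by auto
      then show ?thesis using S(3)[OF that] E_borel left_haar_sets[OF haar] by auto
    qed
    have "\<exists>K\<in>S. emeasure haar {h \<in> K. act x h \<in> T} \<noteq> 0"
    proof (rule ccontr)
      assume "\<not> ?thesis"
      then have "(\<Union>K\<in>S. {h \<in> K. act x h \<in> T}) \<in> null_sets haar"
        using S(1) piece_sets by (intro null_sets_UN' null_setsI) auto
      moreover have "(\<Union>K\<in>S. {h \<in> K. act x h \<in> T}) = ?E"
      proof
        show "?E \<subseteq> (\<Union>K\<in>S. {h \<in> K. act x h \<in> T})"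
        proof
          fix h assume "h \<in> ?E"
          moreover obtain K where "K \<in> S" "h \<in> K" using S(2) by (metis UNIV_I UnionE)
          ultimately show "h \<in> (\<Union>K\<in>S. {h \<in> K. act x h \<in> T})" by blast
        qed
      qed blast
      ultimately show False using E_not_null by simp
    qed
    then show "x \<in> (\<Union>K\<in>S. visiting_set haar act T K)"
      unfolding visiting_set_def by (auto simp: zero_less_iff_neq_zero)
  qed
qed

lemma act_visits_visiting_set:
  fixes act :: "'x \<Rightarrow> 'h::group_add \<Rightarrow> 'x"
  assumes act: "right_action act"
  shows "{g. act \<xi> g \<in> visiting_set haar act T K}
           \<subseteq> (\<lambda>p. fst p + - snd p) ` ({h. act \<xi> h \<in> T} \<times> K)"
proof
  fix g assume "g \<in> {g. act \<xi> g \<in> visiting_set haar act T K}"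
  then obtain h where h: "h \<in> K" "act (act \<xi> g) h \<in> T"
    using visiting_set_visits by fastforce
  then have "g + h \<in> {h. act \<xi> h \<in> T}" by (simp add: right_action_add[OF act])
  moreover have "g = (g + h) + - h" by (simp add: add.assoc)
  ultimately show "g \<in> (\<lambda>p. fst p + - snd p) ` ({h. act \<xi> h \<in> T} \<times> K)"
    using h(1) by (auto intro!: image_eqI[of _ _ "(g + h, h)"])
qed

text \<open>Part (a): for a compact stabilizer the orbit is a Borel set carrying the orbit measure, and
  the orbit measure is sigma-finite, the visiting sets of a compact cover having finite measure.\<close>
lemma orbit_measure_sigma_finite_concentrated:
  fixes act :: "'x::{t2_space, second_countable_topology} \<Rightarrow> 'h::{topological_group_add, t2_space, second_countable_topology} \<Rightarrow> 'x"
  assumes lc: "locally_compact_space (euclidean :: 'h topology)"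
    and haar: "left_haar_measure haar" and act: "right_action act"
    and act_meas: "(\<lambda>p. act (fst p) (snd p)) \<in> borel_measurable (borel \<Otimes>\<^sub>M borel)"
    and stab: "compact (stabilizer act \<xi>)"
  shows "sigma_finite_measure (orbit_measure haar act \<xi>)"
    and "UNIV - orbit act \<xi> \<in> null_sets (orbit_measure haar act \<xi>)"
proof -
  let ?\<mu> = "orbit_measure haar act \<xi>"
  have sets_\<mu>: "sets ?\<mu> = sets borel" and space_\<mu>: "space ?\<mu> = UNIV"
    by (simp_all add: orbit_measure_eq_distr[OF haar])
  obtain T D where T: "compact T" "T \<subseteq> orbit act \<xi>" and D: "compact D" "{h. act \<xi> h \<in> T} \<subseteq> D"
    and pos: "emeasure haar {h. act \<xi> h \<in> T} > 0"
    using orbit_compact_target[OF lc haar act act_meas stab] by blast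
  obtain S where S: "countable S" "\<And>K. K \<in> S \<Longrightarrow> compact K" "\<Union>S = (UNIV :: 'h set)"
    using open_countable_Union_compact[OF lc open_UNIV] by blast
  have T_borel: "T \<in> sets borel" using T(1) by (simp add: compact_imp_closed)
  have visiting_borel: "visiting_set haar act T K \<in> sets borel" if "K \<in> S" for K
    using S(2)[OF that] left_haar_sigma_finite[OF lc haar] left_haar_sets[OF haar]
    by (intro visiting_set_borel act_meas T_borel) (auto simp: compact_imp_closed)
  have orbit_eq: "orbit act \<xi> = (\<Union>K\<in>S. visiting_set haar act T K)"
    using S T_borel T(2) pos
    by (intro orbit_eq_UN_visiting_sets[OF haar act act_meas]) (auto simp: compact_imp_closed)
  have "orbit act \<xi> \<in> sets borel"
    unfolding orbit_eq using S(1) visiting_borel by (intro sets.countable_UN') auto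
  then have compl_borel: "UNIV - orbit act \<xi> \<in> sets borel"
    by (metis sets.compl_sets space_borel)
  have "emeasure ?\<mu> (UNIV - orbit act \<xi>) = 0"
    using compl_borel by (simp add: emeasure_orbit_measure[OF haar act_meas] orbit_def)
  then show null: "UNIV - orbit act \<xi> \<in> null_sets ?\<mu>"
    using compl_borel sets_\<mu> by (intro null_setsI) auto
  have "emeasure ?\<mu> (visiting_set haar act T K) \<noteq> \<infinity>" if "K \<in> S" for K
  proof -
    let ?F = "(\<lambda>p. fst p + - snd p) ` (D \<times> K)"
    have "compact ?F" using D(1) S(2)[OF that]
      by (intro compact_continuous_image compact_Times continuous_intros)
    have "emeasure ?\<mu> (visiting_set haar act T K) = emeasure haar {g. act \<xi> g \<in> visiting_set haar act T K}"
      using visiting_borel[OF that] by (rule emeasure_orbit_measure[OF haar act_meas])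
    also have "\<dots> \<le> emeasure haar ?F"
      using act_visits_visiting_set[OF act, of \<xi> haar T K] D(2) \<open>compact ?F\<close>
      by (intro emeasure_mono) (auto simp: left_haar_sets[OF haar] compact_imp_closed)
    also have "\<dots> < \<infinity>" using left_haar_compact_finite[OF haar \<open>compact ?F\<close>] .
    finally show ?thesis by simp
  qed
  then show "sigma_finite_measure ?\<mu>"
    using S(1) compl_borel visiting_borel null orbit_eq sets_\<mu> space_\<mu>
    by (intro sigma_finite_measure.intro exI[of _ "insert (UNIV - orbit act \<xi>) (visiting_set haar act T ` S)"])
      auto
qed

text \<open>The Haar time \<open>|{h. \<xi>.h \<in> B}|\<close> that the orbit of \<open>\<xi>\<close> spends in a Borel set \<open>B\<close> depends measurably
  on \<open>\<xi>\<close> (Tonelli).\<close>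
lemma orbit_time_measurable:
  fixes act :: "'x::topological_space \<Rightarrow> 'h::topological_space \<Rightarrow> 'x"
  assumes sf: "sigma_finite_measure haar" and haar_sets: "sets haar = sets borel"
    and act_meas: "(\<lambda>p. act (fst p) (snd p)) \<in> borel_measurable (borel \<Otimes>\<^sub>M borel)"
    and B: "B \<in> sets borel"
  shows "(\<lambda>\<xi>. \<integral>\<^sup>+ h. indicator B (act \<xi> h) \<partial>haar) \<in> borel_measurable borel"
proof -
  interpret sigma_finite_measure haar by fact
  have "(\<lambda>p. indicator B (act (fst p) (snd p)) :: ennreal) \<in> borel_measurable (borel \<Otimes>\<^sub>M borel)"
    using measurable_compose[OF act_meas borel_measurable_indicator[OF B]] by (simp add: comp_def)
  then have "(\<lambda>p. indicator B (act (fst p) (snd p)) :: ennreal) \<in> borel_measurable (borel \<Otimes>\<^sub>M haar)"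
    using measurable_cong_sets[OF sets_pair_measure_cong[OF refl haar_sets, of "borel :: 'x measure"] refl,
        of "borel :: ennreal measure"] by simp
  then show ?thesis
    using borel_measurable_nn_integral[of "\<lambda>x h. indicator B (act x h) :: ennreal" borel]
    by (simp add: case_prod_beta')
qed

lemma orbit_time_eq_orbit_measure:
  fixes act :: "'x::topological_space \<Rightarrow> 'h::topological_group_add \<Rightarrow> 'x"
  assumes haar: "left_haar_measure haar"
    and act_meas: "(\<lambda>p. act (fst p) (snd p)) \<in> borel_measurable (borel \<Otimes>\<^sub>M borel)"
    and B: "B \<in> sets borel"
  shows "(\<integral>\<^sup>+ h. indicator B (act \<xi> h) \<partial>haar) = emeasure (orbit_measure haar act \<xi>) B"
proof -
  have "(\<lambda>h. indicator B (act \<xi> h) :: ennreal) = indicator {h. act \<xi> h \<in> B}"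
    by (auto simp: indicator_def)
  moreover have "{h. act \<xi> h \<in> B} \<in> sets haar"
    using act_visits_borel[OF act_meas B] by (simp add: left_haar_sets[OF haar])
  ultimately show ?thesis by (simp add: emeasure_orbit_measure[OF haar act_meas B])
qed

text \<open>The set function \<open>B \<mapsto> \<integral> \<phi>(\<xi>) |{h. \<xi>.h \<in> B}| d\<lambda>(\<xi>)\<close> is countably additive on the Borel sets
  (monotone convergence, twice), so the measure it generates agrees with it on Borel sets.\<close>
lemma emeasure_weighted_orbit_time:
  fixes act :: "'x::topological_space \<Rightarrow> 'h::topological_space \<Rightarrow> 'x"
  assumes sf: "sigma_finite_measure haar" and haar_sets: "sets haar = sets borel"
    and act_meas: "(\<lambda>p. act (fst p) (snd p)) \<in> borel_measurable (borel \<Otimes>\<^sub>M borel)"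
    and lam_sets: "sets lam = sets borel" and \<phi>: "\<phi> \<in> borel_measurable borel"
    and B: "B \<in> sets borel"
  defines "m \<equiv> \<lambda>B. \<integral>\<^sup>+ \<xi>. ennreal (\<phi> \<xi>) * (\<integral>\<^sup>+ h. indicator B (act \<xi> h) \<partial>haar) \<partial>lam"
  shows "emeasure (measure_of UNIV (sets borel) m) B = m B"
proof (rule emeasure_measure_of_sigma[OF _ _ _ B])
  show "sigma_algebra UNIV (sets (borel :: 'x measure))"
    using sets.sigma_algebra_axioms[of "borel :: 'x measure"] by simp
  show "positive (sets borel) m" unfolding positive_def m_def by simp
  show "countably_additive (sets borel) m"
    unfolding countably_additive_def
  proof (intro allI impI)
    fix A :: "nat \<Rightarrow> 'x set"
    assume A: "range A \<subseteq> sets borel" "disjoint_family A"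
    have A_borel: "A i \<in> sets borel" for i using A(1) by auto
    have time_additive: "(\<Sum>i. \<integral>\<^sup>+ h. indicator (A i) (act \<xi> h) \<partial>haar)
        = (\<integral>\<^sup>+ h. indicator (\<Union>i. A i) (act \<xi> h) \<partial>haar)" for \<xi>
    proof -
      have "(\<lambda>h. indicator (A i) (act \<xi> h) :: ennreal) \<in> borel_measurable haar" for i
        using measurable_compose[OF act_orbit_map_measurable[OF act_meas] borel_measurable_indicator[OF A_borel]]
        by (simp add: comp_def measurable_cong_sets[OF haar_sets refl])
      then show ?thesis by (simp add: nn_integral_suminf[symmetric] suminf_indicator[OF A(2)])
    qed
    have "(\<lambda>\<xi>. ennreal (\<phi> \<xi>) * (\<integral>\<^sup>+ h. indicator (A i) (act \<xi> h) \<partial>haar)) \<in> borel_measurable lam" for i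
      using \<phi> orbit_time_measurable[OF sf haar_sets act_meas A_borel]
      by (simp add: measurable_cong_sets[OF lam_sets refl])
    then have "(\<Sum>i. m (A i)) = (\<integral>\<^sup>+ \<xi>. (\<Sum>i. ennreal (\<phi> \<xi>) * (\<integral>\<^sup>+ h. indicator (A i) (act \<xi> h) \<partial>haar)) \<partial>lam)"
      unfolding m_def by (rule nn_integral_suminf[symmetric])
    also have "\<dots> = m (\<Union>i. A i)"
      unfolding m_def by (simp add: ennreal_suminf_cmult time_additive)
    finally show "(\<Sum>i. m (A i)) = m (\<Union>(range A))" by simp
  qed
qed

lemma space_orbit_space: "space (orbit_space act) = range (orbit act)"
  unfolding orbit_space_def by (auto intro!: space_measure_of)

lemma sets_orbit_space:
  "sets (orbit_space act) = sigma_sets (range (orbit act)) {U. U \<subseteq> range (orbit act) \<and> orbit act -` U \<in> sets borel}"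
  unfolding orbit_space_def by (auto intro!: sets_measure_of)

lemma sets_quotient_measure: "sets (quotient_measure act lam \<phi>) = sets (orbit_space act)"
proof -
  have "sets (orbit_space act) \<subseteq> Pow (range (orbit act))"
    using sets.space_closed[of "orbit_space act"] by (simp add: space_orbit_space)
  then show ?thesis
    unfolding quotient_measure_def
    using sets.sigma_sets_eq[of "orbit_space act", unfolded space_orbit_space]
    by (simp add: sets_measure_of)
qed

lemma orbit_map_measurable:
  assumes "sets M = sets borel"
  shows "orbit act \<in> measurable M (orbit_space act)"
  unfolding orbit_space_def using assms sets_eq_imp_space_eq[OF assms]
  by (intro measurable_measure_of) auto

text \<open>A function on the orbit space is measurable as soon as its lift to \<open>X\<close> is Borel: this is
  what the quotient Borel structure is designed for.\<close>
lemma measurable_orbit_space_lift: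
  fixes f :: "'x::topological_space set \<Rightarrow> 'a::topological_space"
  assumes "(\<lambda>\<xi>. f (orbit act \<xi>)) \<in> borel_measurable borel"
  shows "f \<in> borel_measurable (orbit_space act)"
proof (rule borel_measurableI)
  fix V :: "'a set" assume "open V"
  have "orbit act -` (f -` V \<inter> range (orbit act)) = (\<lambda>\<xi>. f (orbit act \<xi>)) -` V" by auto
  also have "\<dots> \<in> sets borel"
    using measurable_sets[OF assms borel_open[OF \<open>open V\<close>]] by simp
  finally show "f -` V \<inter> space (orbit_space act) \<in> sets (orbit_space act)"
    unfolding sets_orbit_space space_orbit_space by (intro sigma_sets.Basic) auto
qed

text \<open>The measure \<open>\<lambda>\<^sub>\<phi>\<close>-bar on \<open>X/H\<close> is the image of the measure \<open>\<phi> d\<lambda>\<close> under the quotient map, so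
  integrals against it can be computed on \<open>X\<close>.\<close>
lemma quotient_measure_eq_distr:
  assumes lam_sets: "sets lam = sets borel" and \<phi>: "\<phi> \<in> borel_measurable borel"
  shows "quotient_measure act lam \<phi> = distr (density lam (\<lambda>\<xi>. ennreal (\<phi> \<xi>))) (orbit_space act) (orbit act)"
proof -
  have \<phi>_lam: "(\<lambda>\<xi>. ennreal (\<phi> \<xi>)) \<in> borel_measurable lam"
    using \<phi> by (simp add: measurable_cong_sets[OF lam_sets refl])
  have space_lam: "space lam = UNIV" using sets_eq_imp_space_eq[OF lam_sets] by simp
  have "sets (orbit_space act) \<subseteq> Pow (range (orbit act))"
    using sets.space_closed[of "orbit_space act"] by (simp add: space_orbit_space)
  then show ?thesis
    unfolding quotient_measure_def distr_def space_orbit_space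
  proof (rule measure_of_eq)
    fix U assume "U \<in> sigma_sets (range (orbit act)) (sets (orbit_space act))"
    then have "U \<in> sets (orbit_space act)"
      using sets.sigma_sets_eq[of "orbit_space act", unfolded space_orbit_space] by simp
    then have "orbit act -` U \<in> sets lam"
      using measurable_sets[OF orbit_map_measurable[OF lam_sets]] by (simp add: space_lam)
    then show "(\<integral>\<^sup>+ \<xi>\<in>orbit act -` U. ennreal (\<phi> \<xi>) \<partial>lam) =
        emeasure (density lam (\<lambda>\<xi>. ennreal (\<phi> \<xi>))) (orbit act -` U \<inter> space (density lam (\<lambda>\<xi>. ennreal (\<phi> \<xi>))))"
      by (simp add: emeasure_density[OF \<phi>_lam] space_lam)
  qed
qed

lemma weighted_orbit_measure_disintegration:
  fixes act :: "'x::topological_space \<Rightarrow> 'h::{topological_group_add, t2_space, second_countable_topology} \<Rightarrow> 'x"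
  assumes lc: "locally_compact_space (euclidean :: 'h topology)"
    and haar: "left_haar_measure haar" and act: "right_action act"
    and act_meas: "(\<lambda>p. act (fst p) (snd p)) \<in> borel_measurable (borel \<Otimes>\<^sub>M borel)"
    and lam_sets: "sets lam = sets borel" and \<phi>: "\<phi> \<in> borel_measurable borel"
    and B: "B \<in> sets borel"
  defines "m \<equiv> \<lambda>B. \<integral>\<^sup>+ \<xi>. ennreal (\<phi> \<xi>) * (\<integral>\<^sup>+ h. indicator B (act \<xi> h) \<partial>haar) \<partial>lam"
  shows "(\<lambda>Orb. emeasure (orbit_measure_of haar act Orb) B) \<in> borel_measurable (quotient_measure act lam \<phi>)"
    and "(\<lambda>\<xi>. ennreal (\<phi> \<xi>) * (\<integral>\<^sup>+ h. indicator B (act \<xi> h) \<partial>haar)) \<in> borel_measurable lam"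
    and "(\<integral>\<^sup>+ Orb. emeasure (orbit_measure_of haar act Orb) B \<partial>(quotient_measure act lam \<phi>)) = m B"
    and "emeasure (measure_of UNIV (sets borel) m) B = m B"
proof -
  define f where "f Orb = emeasure (orbit_measure_of haar act Orb) B" for Orb
  define time where "time \<xi> = (\<integral>\<^sup>+ h. indicator B (act \<xi> h) \<partial>haar)" for \<xi>
  have sf: "sigma_finite_measure haar" by (rule left_haar_sigma_finite[OF lc haar])
  have lift: "f (orbit act \<xi>) = time \<xi>" for \<xi>
    unfolding f_def time_def
    by (simp add: orbit_measure_of_orbit[OF haar act act_meas] orbit_time_eq_orbit_measure[OF haar act_meas B])
  have time: "time \<in> borel_measurable borel"
    unfolding time_def by (rule orbit_time_measurable[OF sf left_haar_sets[OF haar] act_meas B])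
  have f: "f \<in> borel_measurable (orbit_space act)"
    using time by (intro measurable_orbit_space_lift) (simp add: lift)
  then show "(\<lambda>Orb. emeasure (orbit_measure_of haar act Orb) B) \<in> borel_measurable (quotient_measure act lam \<phi>)"
    unfolding f_def by (simp add: measurable_cong_sets[OF sets_quotient_measure refl])
  have \<phi>_lam: "(\<lambda>\<xi>. ennreal (\<phi> \<xi>)) \<in> borel_measurable lam"
    and time_lam: "time \<in> borel_measurable lam"
    using \<phi> time by (simp_all add: measurable_cong_sets[OF lam_sets refl])
  then show "(\<lambda>\<xi>. ennreal (\<phi> \<xi>) * (\<integral>\<^sup>+ h. indicator B (act \<xi> h) \<partial>haar)) \<in> borel_measurable lam"
    unfolding time_def by (rule borel_measurable_times_ennreal)
  show "emeasure (measure_of UNIV (sets borel) m) B = m B"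
    unfolding m_def by (rule emeasure_weighted_orbit_time[OF sf left_haar_sets[OF haar] act_meas lam_sets \<phi> B])
  have "(\<integral>\<^sup>+ Orb. f Orb \<partial>(quotient_measure act lam \<phi>))
      = (\<integral>\<^sup>+ \<xi>. f (orbit act \<xi>) \<partial>density lam (\<lambda>\<xi>. ennreal (\<phi> \<xi>)))"
    unfolding quotient_measure_eq_distr[OF lam_sets \<phi>]
    using f orbit_map_measurable[of "density lam (\<lambda>\<xi>. ennreal (\<phi> \<xi>))" act] lam_sets
    by (intro nn_integral_distr) simp_all
  also have "\<dots> = (\<integral>\<^sup>+ \<xi>. ennreal (\<phi> \<xi>) * time \<xi> \<partial>lam)"
    unfolding lift using nn_integral_density[OF \<phi>_lam time_lam] .
  also have "\<dots> = m B" unfolding m_def time_def ..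
  finally show "(\<integral>\<^sup>+ Orb. emeasure (orbit_measure_of haar act Orb) B \<partial>(quotient_measure act lam \<phi>)) = m B"
    unfolding f_def .
qed

theorem mainTheorem9:
  fixes act :: "'x::polish_space \<Rightarrow> 'h::{topological_group_add, t2_space, second_countable_topology} \<Rightarrow> 'x"
    and haar :: "'h measure"
    and lam :: "'x measure"
  assumes lc: "locally_compact_space (euclidean :: 'h topology)"
    and haar: "left_haar_measure haar"
    and act: "right_action act"
    and act_meas: "(\<lambda>p. act (fst p) (snd p)) \<in> borel_measurable (borel \<Otimes>\<^sub>M borel)"
    and lam_sf: "sigma_finite_measure lam"
    and lam_sets: "sets lam = sets borel"
    and quasi_inv: "\<forall>h B. B \<in> sets borel \<longrightarrow>
                      (emeasure lam ((\<lambda>\<xi>. act \<xi> h) ` B) = 0 \<longleftrightarrow> emeasure lam B = 0)"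
  shows
    "(\<forall>\<xi>. compact (stabilizer act \<xi>) \<longrightarrow>
        sets (orbit_measure haar act \<xi>) = sets borel \<and>
        (\<forall>B \<in> sets borel. emeasure (orbit_measure haar act \<xi>) B = emeasure haar {h. act \<xi> h \<in> B}) \<and>
        sigma_finite_measure (orbit_measure haar act \<xi>) \<and>
        UNIV - orbit act \<xi> \<in> null_sets (orbit_measure haar act \<xi>) \<and>
        (\<forall>\<zeta> \<in> orbit act \<xi>. orbit_measure haar act \<zeta> = orbit_measure haar act \<xi>))
     \<and>
     ((\<forall>\<xi>. compact (stabilizer act \<xi>)) \<longrightarrow>
       (\<forall>\<phi> :: 'x \<Rightarrow> real.
          \<phi> \<in> borel_measurable borel \<and> (\<forall>\<xi>. 0 \<le> \<phi> \<xi>) \<and> integrable lam \<phi> \<and>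
          (AE \<xi> in lam. 0 < (\<integral>\<^sup>+ h. ennreal (\<phi> (act \<xi> h)) \<partial>haar) \<and>
                         (\<integral>\<^sup>+ h. ennreal (\<phi> (act \<xi> h)) \<partial>haar) \<le> 1)
          \<longrightarrow>
          (let \<mu> = measure_of UNIV (sets borel)
                     (\<lambda>B. \<integral>\<^sup>+ \<xi>. ennreal (\<phi> \<xi>) * (\<integral>\<^sup>+ h. indicator B (act \<xi> h) \<partial>haar) \<partial>lam)
           in sets \<mu> = sets borel \<and>
              (\<forall>B \<in> sets borel.
                 (\<lambda>Orb. emeasure (orbit_measure_of haar act Orb) B)
                    \<in> borel_measurable (quotient_measure act lam \<phi>) \<and>
                 (\<lambda>\<xi>. ennreal (\<phi> \<xi>) * (\<integral>\<^sup>+ h. indicator B (act \<xi> h) \<partial>haar))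
                    \<in> borel_measurable lam \<and>
                 emeasure \<mu> B = (\<integral>\<^sup>+ Orb. emeasure (orbit_measure_of haar act Orb) B
                                     \<partial>(quotient_measure act lam \<phi>)) \<and>
                 emeasure \<mu> B = (\<integral>\<^sup>+ \<xi>. ennreal (\<phi> \<xi>) * (\<integral>\<^sup>+ h. indicator B (act \<xi> h) \<partial>haar) \<partial>lam)))))"
proof (intro conjI allI impI)
  fix \<xi> assume stab: "compact (stabilizer act \<xi>)"
  show "sets (orbit_measure haar act \<xi>) = sets borel"
    by (simp add: orbit_measure_eq_distr[OF haar])
  show "\<forall>B \<in> sets borel. emeasure (orbit_measure haar act \<xi>) B = emeasure haar {h. act \<xi> h \<in> B}"
    using emeasure_orbit_measure[OF haar act_meas] by blast
  show "sigma_finite_measure (orbit_measure haar act \<xi>)"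
    and "UNIV - orbit act \<xi> \<in> null_sets (orbit_measure haar act \<xi>)"
    using orbit_measure_sigma_finite_concentrated[OF lc haar act act_meas stab] by blast+
  show "\<forall>\<zeta> \<in> orbit act \<xi>. orbit_measure haar act \<zeta> = orbit_measure haar act \<xi>"
    using orbit_measure_act[OF haar act act_meas] by (auto simp: orbit_def)
qed (auto simp: Let_def sets_measure_of_conv sets.sigma_sets_eq[of "borel :: 'x measure", unfolded space_borel]
    weighted_orbit_measure_disintegration[OF lc haar act act_meas lam_sets])

end
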